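(* Let $(G,r,k,c,\pi)$ be an instance of $k$-PCST with optimal value $\mathrm{OPT}$. Suppose there exists an optimal solution $F^{\star}=(V^{\star},E^{\star})$ of this instance with $\sum_{e\in E^{\star}}c(e)\le \mathrm{OPT}/2$. Then the output $F_{\mathrm{OUT}}=(V_{\mathrm{OUT}},E_{\mathrm{OUT}})$ of the algorithm $\mathcal{A}$ described below satisfies \[ \sum_{e\in E_{\mathrm{OUT}}}c(e)+\sum_{v\notin V_{\mathrm{OUT}}}\pi(v)\le 3\,\mathrm{OPT}. \]
   Context: An instance of $k$-PCST consists of an undirected connected graph $G=(V,E)$, a root $r\in V$, an integer $k$, a nonnegative edge cost $c:E\to\mathbb{R}_+$ and a nonnegative penalty $\pi:V\to\mathbb{R}_+$. A feasible solution is a subtree $F=(V_F,E_F)$ of $G$ with $r\in V_F$ and $|V_F|\ge k$, of cost $\sum_{e\in E_F}c(e)+\sum_{v\in V\setminus V_F}\pi(v)$; $\mathrm{OPT}$ is the minimum cost. The PCST instance $(G,r,c,\pi)$ is the same problem without the constraint $|V_F|\ge k$; the rooted $k$-MST instance $(G,r,k,c)$ asks for a subtree containing $r$ with at least $k$ vertices minimizing total edge cost. Procedure 1 is the Goemans–Williamson primal-dual algorithm for PCST, which returns a subtree $F=(V_F,E_F)$ containing $r$ whose PCST cost is at most $2$ times the optimal PCST value. Procedure 2 is Garg's primal-dual algorithm for rooted $k$-MST, which returns a subtree containing $r$ with at least $k$ vertices whose edge cost is at most $2$ times the optimal rooted $k$-MST value. Algorithm $\mathcal{A}$: Step 1: apply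 Procedure 1 to $(G,r,c,\pi)$ obtaining $F_{\mathrm{PCST}}=(V_{\mathrm{PCST}},E_{\mathrm{PCST}})$; if $|V_{\mathrm{PCST}}|\ge k$, return $F_{\mathrm{PCST}}$; otherwise go to Step 2. Step 2: apply Procedure 2 to $(G,r,k,c)$ obtaining $F_{k\text{-MST}}=(V_{k\text{-MST}},E_{k\text{-MST}})$. Step 3: form the graph $G'=(V_{\mathrm{PCST}}\cup V_{k\text{-MST}},E_{\mathrm{PCST}}\cup E_{k\text{-MST}})$, compute a minimum spanning tree $F_{\mathrm{OUT}}$ of $G'$ with respect to $c$, and return it. *)

theory Defs
  imports Complex_Main
begin

definition graph :: "'a set \<Rightarrow> 'a set set \<Rightarrow> bool" where
  "graph V E \<longleftrightarrow> finite V \<and> (\<forall>e\<in>E. card e = 2 \<and> e \<subseteq> V)"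

definition adj :: "'a set set \<Rightarrow> ('a \<times> 'a) set" where
  "adj E = {(u, v). {u, v} \<in> E}"

definition connected_graph :: "'a set \<Rightarrow> 'a set set \<Rightarrow> bool" where
  "connected_graph V E \<longleftrightarrow> V \<noteq> {} \<and> (\<forall>u\<in>V. \<forall>v\<in>V. (u, v) \<in> (adj E)\<^sup>*)"

text \<open>A tree: a connected graph in which every edge is a bridge (minimally connected,
  i.e. connected and acyclic).\<close>

definition is_tree :: "'a set \<Rightarrow> 'a set set \<Rightarrow> bool" where
  "is_tree V E \<longleftrightarrow> graph V E \<and> connected_graph V E \<and>
     (\<forall>e\<in>E. \<not> connected_graph V (E - {e}))"

definition subtree :: "'a set \<Rightarrow> 'a set set \<Rightarrow> 'a set \<Rightarrow> 'a set set \<Rightarrow> bool" where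
  "subtree V E VF EF \<longleftrightarrow> VF \<subseteq> V \<and> EF \<subseteq> E \<and> is_tree VF EF"

definition kpcst_instance ::
  "'a set \<Rightarrow> 'a set set \<Rightarrow> 'a \<Rightarrow> ('a set \<Rightarrow> real) \<Rightarrow> ('a \<Rightarrow> real) \<Rightarrow> bool" where
  "kpcst_instance V E r c \<pi> \<longleftrightarrow> graph V E \<and> connected_graph V E \<and> r \<in> V \<and>
     (\<forall>e\<in>E. 0 \<le> c e) \<and> (\<forall>v\<in>V. 0 \<le> \<pi> v)"

definition pcst_cost ::
  "'a set \<Rightarrow> ('a set \<Rightarrow> real) \<Rightarrow> ('a \<Rightarrow> real) \<Rightarrow> 'a set \<Rightarrow> 'a set set \<Rightarrow> real" where
  "pcst_cost V c \<pi> VF EF = (\<Sum>e\<in>EF. c e) + (\<Sum>v\<in>V - VF. \<pi> v)"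

definition pcst_feasible :: "'a set \<Rightarrow> 'a set set \<Rightarrow> 'a \<Rightarrow> 'a set \<Rightarrow> 'a set set \<Rightarrow> bool" where
  "pcst_feasible V E r VF EF \<longleftrightarrow> subtree V E VF EF \<and> r \<in> VF"

definition kpcst_feasible ::
  "'a set \<Rightarrow> 'a set set \<Rightarrow> 'a \<Rightarrow> nat \<Rightarrow> 'a set \<Rightarrow> 'a set set \<Rightarrow> bool" where
  "kpcst_feasible V E r k VF EF \<longleftrightarrow> pcst_feasible V E r VF EF \<and> k \<le> card VF"

text \<open>Optimal values (infima over the finitely many feasible solutions).\<close>

definition kpcst_OPT ::
  "'a set \<Rightarrow> 'a set set \<Rightarrow> 'a \<Rightarrow> nat \<Rightarrow> ('a set \<Rightarrow> real) \<Rightarrow> ('a \<Rightarrow> real) \<Rightarrow> real" where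
  "kpcst_OPT V E r k c \<pi> =
     Inf {pcst_cost V c \<pi> VF EF | VF EF. kpcst_feasible V E r k VF EF}"

definition pcst_OPT ::
  "'a set \<Rightarrow> 'a set set \<Rightarrow> 'a \<Rightarrow> ('a set \<Rightarrow> real) \<Rightarrow> ('a \<Rightarrow> real) \<Rightarrow> real" where
  "pcst_OPT V E r c \<pi> = Inf {pcst_cost V c \<pi> VF EF | VF EF. pcst_feasible V E r VF EF}"

definition kmst_OPT ::
  "'a set \<Rightarrow> 'a set set \<Rightarrow> 'a \<Rightarrow> nat \<Rightarrow> ('a set \<Rightarrow> real) \<Rightarrow> real" where
  "kmst_OPT V E r k c = Inf {(\<Sum>e\<in>EF. c e) | VF EF. kpcst_feasible V E r k VF EF}"

definition proc1_output ::
  "'a set \<Rightarrow> 'a set set \<Rightarrow> 'a \<Rightarrow> ('a set \<Rightarrow> real) \<Rightarrow> ('a \<Rightarrow> real) \<Rightarrow> 'a set \<Rightarrow> 'a set set \<Rightarrow> bool" where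
  "proc1_output V E r c \<pi> VP EP \<longleftrightarrow> pcst_feasible V E r VP EP \<and>
     pcst_cost V c \<pi> VP EP \<le> 2 * pcst_OPT V E r c \<pi>"

definition proc2_output ::
  "'a set \<Rightarrow> 'a set set \<Rightarrow> 'a \<Rightarrow> nat \<Rightarrow> ('a set \<Rightarrow> real) \<Rightarrow> 'a set \<Rightarrow> 'a set set \<Rightarrow> bool" where
  "proc2_output V E r k c VK EK \<longleftrightarrow> kpcst_feasible V E r k VK EK \<and>
     (\<Sum>e\<in>EK. c e) \<le> 2 * kmst_OPT V E r k c"

definition is_mst :: "'a set \<Rightarrow> 'a set set \<Rightarrow> ('a set \<Rightarrow> real) \<Rightarrow> 'a set set \<Rightarrow> bool" where
  "is_mst V' E' c T \<longleftrightarrow> T \<subseteq> E' \<and> is_tree V' T \<and>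
     (\<forall>T'. T' \<subseteq> E' \<and> is_tree V' T' \<longrightarrow> (\<Sum>e\<in>T. c e) \<le> (\<Sum>e\<in>T'. c e))"

text \<open>(VOUT, EOUT) is a possible output of Algorithm A (for any admissible outputs of the
  two procedures and any choice of minimum spanning tree).\<close>

definition algA_output ::
  "'a set \<Rightarrow> 'a set set \<Rightarrow> 'a \<Rightarrow> nat \<Rightarrow> ('a set \<Rightarrow> real) \<Rightarrow> ('a \<Rightarrow> real)
     \<Rightarrow> 'a set \<Rightarrow> 'a set set \<Rightarrow> bool" where
  "algA_output V E r k c \<pi> VOUT EOUT \<longleftrightarrow>
     (\<exists>VP EP. proc1_output V E r c \<pi> VP EP \<and>
        (if k \<le> card VP then VOUT = VP \<and> EOUT = EP
         else (\<exists>VK EK. proc2_output V E r k c VK EK \<and>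
                 VOUT = VP \<union> VK \<and> is_mst (VP \<union> VK) (EP \<union> EK) c EOUT)))"

end

theory Submission
  imports Defs
begin

text \<open>If Step 1 returns, its PCST cost is at most twice the PCST optimum, which is at most
  OPT because the optimal k-PCST solution F* is PCST-feasible. Otherwise the output spans a
  vertex set containing that of F_PCST and uses only edges of F_PCST and F_k-MST, so its cost
  is at most the PCST cost of F_PCST plus the edge cost of F_k-MST, i.e. at most
  2 OPT + 2 c(E*) \<le> 3 OPT.\<close>

lemma subtree_finite_edges:
  assumes "subtree V E VF EF"
  shows "finite EF"
proof -
  have "EF \<subseteq> Pow VF" "finite VF"
    using assms unfolding subtree_def is_tree_def graph_def by auto
  then show ?thesis by (meson finite_Pow_iff rev_finite_subset)
qed

lemma pcst_feasible_finite_edges: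
  "pcst_feasible V E r VF EF \<Longrightarrow> finite EF"
  unfolding pcst_feasible_def by (blast intro: subtree_finite_edges)

lemma edge_cost_nonneg:
  assumes "kpcst_instance V E r c \<pi>" and "pcst_feasible V E r VF EF"
  shows "0 \<le> (\<Sum>e\<in>EF. c e)"
  using assms unfolding kpcst_instance_def pcst_feasible_def subtree_def
  by (intro sum_nonneg) auto

lemma pcst_cost_nonneg:
  assumes "kpcst_instance V E r c \<pi>" and "pcst_feasible V E r VF EF"
  shows "0 \<le> pcst_cost V c \<pi> VF EF"
proof -
  have "0 \<le> (\<Sum>v\<in>V - VF. \<pi> v)"
    using assms(1) unfolding kpcst_instance_def by (intro sum_nonneg) auto
  then show ?thesis using edge_cost_nonneg[OF assms] unfolding pcst_cost_def by simp
qed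

lemma pcst_OPT_le_cost:
  assumes "kpcst_instance V E r c \<pi>" and "pcst_feasible V E r VF EF"
  shows "pcst_OPT V E r c \<pi> \<le> pcst_cost V c \<pi> VF EF"
  unfolding pcst_OPT_def
proof (rule cInf_lower)
  show "pcst_cost V c \<pi> VF EF \<in> {pcst_cost V c \<pi> VF EF |VF EF. pcst_feasible V E r VF EF}"
    using assms(2) by blast
  show "bdd_below {pcst_cost V c \<pi> VF EF |VF EF. pcst_feasible V E r VF EF}"
    unfolding bdd_below_def using pcst_cost_nonneg[OF assms(1)] by blast
qed

lemma kmst_OPT_le_edge_cost:
  assumes "kpcst_instance V E r c \<pi>" and "kpcst_feasible V E r k VF EF"
  shows "kmst_OPT V E r k c \<le> (\<Sum>e\<in>EF. c e)"
  unfolding kmst_OPT_def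
proof (rule cInf_lower)
  show "(\<Sum>e\<in>EF. c e) \<in> {(\<Sum>e\<in>EF. c e) |VF EF. kpcst_feasible V E r k VF EF}"
    using assms(2) by blast
  show "bdd_below {(\<Sum>e\<in>EF. c e) |VF EF. kpcst_feasible V E r k VF EF}"
    unfolding bdd_below_def kpcst_feasible_def using edge_cost_nonneg[OF assms(1)] by blast
qed

lemma sum_subset_Un_le:
  fixes f :: "'a \<Rightarrow> 'b :: ordered_comm_monoid_add"
  assumes "finite A" "finite B" "C \<subseteq> A \<union> B" "\<And>x. x \<in> A \<union> B \<Longrightarrow> 0 \<le> f x"
  shows "sum f C \<le> sum f A + sum f B"
proof -
  have "sum f C \<le> sum f (A \<union> B)"
    using assms by (intro sum_mono2) auto
  also have "\<dots> + sum f (A \<inter> B) = sum f A + sum f B"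
    using sum.union_inter[OF assms(1,2)] .
  moreover have "0 \<le> sum f (A \<inter> B)"
    using assms(4) by (intro sum_nonneg) auto
  ultimately show ?thesis
    by (metis add_increasing2 order_trans)
qed

lemma mst_cost_le_sum:
  assumes "is_mst V' (E1 \<union> E2) c T" "finite E1" "finite E2"
    and "\<And>e. e \<in> E1 \<union> E2 \<Longrightarrow> 0 \<le> c e"
  shows "(\<Sum>e\<in>T. c e) \<le> (\<Sum>e\<in>E1. c e) + (\<Sum>e\<in>E2. c e)"
  using assms unfolding is_mst_def by (intro sum_subset_Un_le) auto

lemma penalty_antimono:
  assumes "kpcst_instance V E r c \<pi>" and "VF \<subseteq> VF'"
  shows "(\<Sum>v\<in>V - VF'. \<pi> v) \<le> (\<Sum>v\<in>V - VF. \<pi> v)"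
  using assms unfolding kpcst_instance_def graph_def by (intro sum_mono2) auto

theorem proposition1:
  fixes V :: "'a set" and E :: "'a set set" and r :: 'a and k :: nat
    and c :: "'a set \<Rightarrow> real" and \<pi> :: "'a \<Rightarrow> real"
    and Vstar :: "'a set" and Estar :: "'a set set"
    and VOUT :: "'a set" and EOUT :: "'a set set"
  assumes inst: "kpcst_instance V E r c \<pi>"
    and opt_feas: "kpcst_feasible V E r k Vstar Estar"
    and opt_val: "pcst_cost V c \<pi> Vstar Estar = kpcst_OPT V E r k c \<pi>"
    and small_edges: "(\<Sum>e\<in>Estar. c e) \<le> kpcst_OPT V E r k c \<pi> / 2"
    and out: "algA_output V E r k c \<pi> VOUT EOUT"
  shows "(\<Sum>e\<in>EOUT. c e) + (\<Sum>v\<in>V - VOUT. \<pi> v) \<le> 3 * kpcst_OPT V E r k c \<pi>"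
proof -
  let ?OPT = "kpcst_OPT V E r k c \<pi>"
  have star_feas: "pcst_feasible V E r Vstar Estar"
    using opt_feas unfolding kpcst_feasible_def by blast
  have OPT_nonneg: "0 \<le> ?OPT"
    using pcst_cost_nonneg[OF inst star_feas] opt_val by simp
  obtain VP EP where P: "pcst_feasible V E r VP EP"
    and P_cost: "pcst_cost V c \<pi> VP EP \<le> 2 * ?OPT"
    and rest: "if k \<le> card VP then VOUT = VP \<and> EOUT = EP
      else \<exists>VK EK. proc2_output V E r k c VK EK \<and>
        VOUT = VP \<union> VK \<and> is_mst (VP \<union> VK) (EP \<union> EK) c EOUT"
    using out pcst_OPT_le_cost[OF inst star_feas] opt_val
    unfolding algA_output_def proc1_output_def by fastforce
  show ?thesis
  proof (cases "k \<le> card VP")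
    case True
    then show ?thesis using rest P_cost OPT_nonneg unfolding pcst_cost_def by auto
  next
    case False
    then obtain VK EK where K: "kpcst_feasible V E r k VK EK"
      and K_cost: "(\<Sum>e\<in>EK. c e) \<le> 2 * kmst_OPT V E r k c"
      and VOUT: "VOUT = VP \<union> VK" and mst: "is_mst (VP \<union> VK) (EP \<union> EK) c EOUT"
      using rest unfolding proc2_output_def by auto
    have "EP \<union> EK \<subseteq> E"
      using P K unfolding kpcst_feasible_def pcst_feasible_def subtree_def by blast
    then have "(\<Sum>e\<in>EOUT. c e) \<le> (\<Sum>e\<in>EP. c e) + (\<Sum>e\<in>EK. c e)"
      using inst K P unfolding kpcst_instance_def kpcst_feasible_def
      by (intro mst_cost_le_sum[OF mst] pcst_feasible_finite_edges) auto
    moreover have "(\<Sum>v\<in>V - VOUT. \<pi> v) \<le> (\<Sum>v\<in>V - VP. \<pi> v)"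
      unfolding VOUT using inst by (rule penalty_antimono) blast
    ultimately show ?thesis
      using P_cost K_cost kmst_OPT_le_edge_cost[OF inst opt_feas] small_edges
      unfolding pcst_cost_def by linarith
  qed
qed

end
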